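(* For every bin capacity $S>0$, every finite multiset $D$ of items with sizes in $(0,S]$ and every integer $k\ge1$, $OPT(D_k)\le 2V(D_k)/S+k$.
   Context: $D_k$ is the collection of $k$ copies of each item of $D$, and $V(D_k)$ is the total size of all items in $D_k$ (i.e. $k$ times the total size of $D$). A $k$-times bin packing of $D$ assigns all copies in $D_k$ to bins so that each bin has total size at most $S$ and no bin contains two copies of the same item; $OPT(D_k)$ is the minimum number of bins. *)

theory Defs
  imports Complex_Main "HOL-Library.Multiset"
begin

text \<open>Items are given as a list xs (item i has size xs ! i); copy (i,j), j < k, is the
 j-th copy of item i. A packing f assigns copy (i,j) to bin f i j < m.\<close>

definition k_packing :: "real \<Rightarrow> real list \<Rightarrow> nat \<Rightarrow> nat \<Rightarrow> (nat \<Rightarrow> nat \<Rightarrow> nat) \<Rightarrow> bool" where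
  "k_packing S xs k m f \<longleftrightarrow>
     (\<forall>i<length xs. \<forall>j<k. f i j < m) \<and>
     (\<forall>i<length xs. inj_on (f i) {..<k}) \<and>
     (\<forall>b<m. (\<Sum>(i,j)\<in>{(i,j). i < length xs \<and> j < k \<and> f i j = b}. xs ! i) \<le> S)"

definition opt_k_list :: "real \<Rightarrow> real list \<Rightarrow> nat \<Rightarrow> nat" where
  "opt_k_list S xs k = (LEAST m. \<exists>f. k_packing S xs k m f)"

text \<open>OPT(D_k) for a multiset D of item sizes (independent of the enumeration chosen).\<close>
definition opt_k :: "real \<Rightarrow> real multiset \<Rightarrow> nat \<Rightarrow> nat" where
  "opt_k S D k = opt_k_list S (SOME xs. mset xs = D) k"

definition vol_k :: "real multiset \<Rightarrow> nat \<Rightarrow> real" where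
  "vol_k D k = real k * sum_mset D"

end

theory Submission
  imports Defs
begin

text \<open>Pack one copy of D by Next Fit: an item goes into the current bin if it fits and opens a
 new bin otherwise. A new bin is opened only when the current load plus the next item exceeds S,
 which maintains the invariant (m - 1) S + (load of the current bin) \<le> 2 V(D) for the m bins
 used. Putting the j-th copy of every item into the j-th shifted copy of this packing gives a
 k-times packing with k m \<le> 2 V(D_k)/S + k bins.\<close>

definition load :: "real list \<Rightarrow> (nat \<Rightarrow> nat) \<Rightarrow> nat \<Rightarrow> real" where
  "load xs g b = (\<Sum>i\<in>{i. i < length xs \<and> g i = b}. xs ! i)"

definition bin_assignment :: "real \<Rightarrow> real list \<Rightarrow> nat \<Rightarrow> (nat \<Rightarrow> nat) \<Rightarrow> bool" where
  "bin_assignment S xs m g \<longleftrightarrow> (\<forall>i<length xs. g i < m) \<and> (\<forall>b<m. load xs g b \<le> S)"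

lemma load_snoc:
  "load (xs @ [y]) (g(length xs := c)) b = load xs g b + (if b = c then y else 0)"
proof -
  let ?n = "length xs"
  have bin: "{i. i < length (xs @ [y]) \<and> (g(?n := c)) i = b} =
      {i. i < ?n \<and> g i = b} \<union> (if b = c then {?n} else {})"
    by (auto simp: less_Suc_eq)
  have "(\<Sum>i\<in>{i. i < ?n \<and> g i = b}. (xs @ [y]) ! i) = load xs g b"
    unfolding load_def by (rule sum.cong) (auto simp: nth_append)
  then show ?thesis
    unfolding load_def[of "xs @ [y]"] bin by (auto simp: sum.union_disjoint)
qed

lemma load_nonneg: "\<forall>x\<in>set xs. 0 \<le> x \<Longrightarrow> 0 \<le> load xs g b"
  unfolding load_def by (intro sum_nonneg) auto

lemma load_unused_bin: "\<forall>i<length xs. g i < m \<Longrightarrow> load xs g m = 0"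
  unfolding load_def by (intro sum.neutral) auto

lemma next_fit_step:
  assumes packed: "bin_assignment S xs m g" and "1 \<le> m"
    and inv: "real (m - 1) * S + load xs g (m - 1) \<le> 2 * sum_list xs"
    and y: "0 \<le> y" "y \<le> S"
  shows "\<exists>m' g'. bin_assignment S (xs @ [y]) m' g' \<and> 1 \<le> m' \<and>
           real (m' - 1) * S + load (xs @ [y]) g' (m' - 1) \<le> 2 * sum_list (xs @ [y])"
proof -
  have bins: "\<forall>i<length xs. g i < m" and loads: "\<forall>b<m. load xs g b \<le> S"
    using packed by (auto simp: bin_assignment_def)
  show ?thesis
  proof (cases "load xs g (m - 1) + y \<le> S")
    case True
    define g' where "g' = g(length xs := m - 1)"
    have load': "load (xs @ [y]) g' b = load xs g b + (if b = m - 1 then y else 0)" for b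
      unfolding g'_def by (rule load_snoc)
    have "\<forall>i<length (xs @ [y]). g' i < m"
      using bins \<open>1 \<le> m\<close> by (simp add: g'_def less_Suc_eq)
    moreover have "\<forall>b<m. load (xs @ [y]) g' b \<le> S"
      using loads True by (simp add: load')
    moreover have "real (m - 1) * S + load (xs @ [y]) g' (m - 1) \<le> 2 * sum_list (xs @ [y])"
      using inv y by (simp add: load')
    ultimately show ?thesis
      using \<open>1 \<le> m\<close> unfolding bin_assignment_def by blast
  next
    case False
    define g' where "g' = g(length xs := m)"
    have load': "load (xs @ [y]) g' b = load xs g b + (if b = m then y else 0)" for b
      unfolding g'_def by (rule load_snoc)
    have unused: "load xs g m = 0"
      using bins by (rule load_unused_bin)
    have "\<forall>i<length (xs @ [y]). g' i < m + 1"
      using bins by (simp add: g'_def less_Suc_eq)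
    moreover have "\<forall>b<m + 1. load (xs @ [y]) g' b \<le> S"
      using loads unused y by (auto simp: load' less_Suc_eq)
    moreover have "real (m + 1 - 1) * S = real (m - 1) * S + S"
      using \<open>1 \<le> m\<close> by (simp add: of_nat_diff algebra_simps)
    then have "real (m + 1 - 1) * S + load (xs @ [y]) g' (m + 1 - 1) \<le> 2 * sum_list (xs @ [y])"
      using inv False unused by (simp add: load')
    ultimately show ?thesis
      unfolding bin_assignment_def by (intro exI[of _ "m + 1"] exI[of _ g']) simp
  qed
qed

lemma next_fit:
  assumes "0 \<le> S" and "\<forall>x\<in>set xs. 0 \<le> x \<and> x \<le> S"
  shows "\<exists>m g. bin_assignment S xs m g \<and> 1 \<le> m \<and>
           real (m - 1) * S + load xs g (m - 1) \<le> 2 * sum_list xs"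
  using assms(2)
proof (induction xs rule: rev_induct)
  case Nil
  have "bin_assignment S [] 1 (\<lambda>_. 0)"
    using \<open>0 \<le> S\<close> by (simp add: bin_assignment_def load_def)
  then show ?case by (auto simp: load_def)
next
  case (snoc y xs)
  then obtain m g where "bin_assignment S xs m g" "1 \<le> m"
      "real (m - 1) * S + load xs g (m - 1) \<le> 2 * sum_list xs"
    by auto
  with next_fit_step snoc.prems show ?case by simp
qed

lemma bin_assignment_volume_bound:
  assumes "0 < S" and "\<forall>x\<in>set xs. 0 \<le> x \<and> x \<le> S"
  obtains m g where "bin_assignment S xs m g" "real m \<le> 2 * sum_list xs / S + 1"
proof -
  obtain m g where packed: "bin_assignment S xs m g" and "1 \<le> m"
      and inv: "real (m - 1) * S + load xs g (m - 1) \<le> 2 * sum_list xs"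
    using next_fit[OF less_imp_le[OF \<open>0 < S\<close>] assms(2)] by blast
  have "0 \<le> load xs g (m - 1)"
    using assms(2) by (intro load_nonneg) auto
  with inv have "real (m - 1) \<le> 2 * sum_list xs / S"
    using \<open>0 < S\<close> by (simp add: field_simps)
  with \<open>1 \<le> m\<close> have "real m \<le> 2 * sum_list xs / S + 1"
    by (simp add: of_nat_diff)
  with packed show ?thesis by (rule that)
qed

lemma shifted_bin_copies:
  fixes g :: "nat \<Rightarrow> nat"
  assumes "\<forall>i<length xs. g i < m" and "b < k * m"
  shows "{(i, j). i < length xs \<and> j < k \<and> g i + j * m = b} =
           (\<lambda>i. (i, b div m)) ` {i. i < length xs \<and> g i = b mod m}"
proof -
  have "0 < m" using \<open>b < k * m\<close> by (cases m) auto
  have "b div m < k"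
    using assms(2) \<open>0 < m\<close> by (simp add: div_less_iff_less_mult)
  moreover have "g i + j * m = b \<longleftrightarrow> g i = b mod m \<and> j = b div m" if "i < length xs" for i j
    using assms(1) that \<open>0 < m\<close> by auto
  ultimately show ?thesis by auto
qed

lemma k_packing_shifted_copies:
  assumes "bin_assignment S xs m g"
  shows "k_packing S xs k (k * m) (\<lambda>i j. g i + j * m)"
  unfolding k_packing_def
proof (intro conjI allI impI)
  fix i j assume "i < length xs" "j < k"
  then have "g i < m" using assms by (simp add: bin_assignment_def)
  moreover have "(j + 1) * m \<le> k * m" using \<open>j < k\<close> by (intro mult_right_mono) auto
  ultimately show "g i + j * m < k * m" by simp
next
  fix i assume "i < length xs"
  then have "0 < m" using assms by (fastforce simp: bin_assignment_def)
  then show "inj_on (\<lambda>j. g i + j * m) {..<k}" by (auto simp: inj_on_def)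
next
  fix b assume b: "b < k * m"
  then have "0 < m" by (cases m) auto
  have bins: "\<forall>i<length xs. g i < m" using assms by (simp add: bin_assignment_def)
  have "(\<Sum>(i, j)\<in>{(i, j). i < length xs \<and> j < k \<and> g i + j * m = b}. xs ! i) =
          load xs g (b mod m)"
    unfolding shifted_bin_copies[OF bins b] load_def by (subst sum.reindex) (auto simp: inj_on_def)
  also have "\<dots> \<le> S"
    using assms \<open>0 < m\<close> by (simp add: bin_assignment_def)
  finally show "(\<Sum>(i, j)\<in>{(i, j). i < length xs \<and> j < k \<and> g i + j * m = b}. xs ! i) \<le> S" .
qed

lemma opt_k_le_k_packing:
  assumes "k_packing S (SOME xs. mset xs = D) k m f"
  shows "opt_k S D k \<le> m"
  unfolding opt_k_def opt_k_list_def using assms by (intro Least_le) blast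

theorem lemma10:
  fixes S :: real and D :: "real multiset" and k :: nat
  assumes "S > 0"
    and "\<forall>x\<in>#D. 0 < x \<and> x \<le> S"
    and "k \<ge> 1"
  shows "real (opt_k S D k) \<le> 2 * vol_k D k / S + real k"
proof -
  define xs where "xs = (SOME xs. mset xs = D)"
  have "mset xs = D" unfolding xs_def by (rule someI_ex) (rule ex_mset)
  then have sizes: "\<forall>x\<in>set xs. 0 \<le> x \<and> x \<le> S" and vol: "sum_list xs = sum_mset D"
    using assms(2) by (auto simp: sum_mset_sum_list less_imp_le)
  obtain m g where packed: "bin_assignment S xs m g" and m: "real m \<le> 2 * sum_list xs / S + 1"
    using bin_assignment_volume_bound[OF \<open>S > 0\<close> sizes] by blast
  have "real (opt_k S D k) \<le> real k * real m"
    using k_packing_shifted_copies[OF packed] unfolding of_nat_mult[symmetric] of_nat_le_iff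
    by (intro opt_k_le_k_packing) (simp add: xs_def)
  also have "\<dots> \<le> real k * (2 * sum_list xs / S + 1)"
    using m by (intro mult_left_mono) auto
  also have "\<dots> = 2 * vol_k D k / S + real k"
    by (simp add: vol vol_k_def distrib_left)
  finally show ?thesis .
qed

end
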